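(* Write $z=(z_1,\ldots,z_n)\in\mathbb{C}^n$ and let constants $m\ge 2$, $R>0$, $A>0$, $B>0$, $k\in(0,1)$, and $K>0$ be given. Let \[ \widetilde\Omega_m=\Big\{z\in B(0,R) \;\Big|\; r(z)=\operatorname{Re} z_n - A|z_1|^m + B\Big(\sum_{j=2}^n|z_j|^m+|z_n||z|\Big)<0\Big\}. \] Then there exist positive constants $R_1$ and $C$ such that \[ F^K_{\widetilde\Omega_m}(z,X)\le C\frac{|X_n|}{d_{\widetilde\Omega_m}(z)^{1-\frac{1}{2m}}} \] for all $z\in B(0,R_1)\cap\Lambda(k)$ and all $X\in\mathbb{C}^n$ with $|X|\le K|X_n|$.
   Context: $B(z,R)$ denotes the Euclidean ball in $\mathbb{C}^n$ with center $z$ and radius $R$, and $|\cdot|$ the Euclidean norm. For $0<k<1$, $\Lambda(k)=\{z\in\mathbb{C}^n \mid -\operatorname{Re} z_n>k|z|\}$. $d_{\Omega}(z)$ denotes the Euclidean distance from $z$ to the boundary of $\Omega$. For a domain $\Omega\subset\mathbb{C}^n$, $z\in\Omega$ and $X\in\mathbb{C}^n$, the Kobayashi(–Royden) metric is $F^K_\Omega(z,X)=\inf\{1/\lambda \mid \exists f\colon D\to\Omega \text{ holomorphic},\ f(0)=z,\ f'(0)=\lambda X,\ \lambda>0\}$, where $D$ is the unit disc in $\mathbb{C}$. $X_n$ denotes the $n$-th component of $X$. *)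

theory Defs
  imports "HOL-Complex_Analysis.Complex_Analysis"
begin

text \<open>The coordinates z_1 and z_n are given by two
distinct indices i1, iN of the finite index type; the sum over j = 2..n is the sum over
all indices different from i1 (for the last index iN included).\<close>

definition Omega_m ::
  "nat \<Rightarrow> real \<Rightarrow> real \<Rightarrow> real \<Rightarrow> 'n::finite \<Rightarrow> 'n \<Rightarrow> (complex^'n) set" where
  "Omega_m m R A B i1 iN =
     {z \<in> ball 0 R. Re (z $ iN) - A * norm (z $ i1) ^ m
        + B * ((\<Sum>j\<in>UNIV - {i1}. norm (z $ j) ^ m) + norm (z $ iN) * norm z) < 0}"

definition Lambda_cone :: "real \<Rightarrow> 'n::finite \<Rightarrow> (complex^'n) set" where
  "Lambda_cone k iN = {z. - Re (z $ iN) > k * norm z}"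

definition dist_bd :: "(complex^'n::finite) set \<Rightarrow> complex^'n \<Rightarrow> real" where
  "dist_bd \<Omega> z = infdist z (frontier \<Omega>)"

text \<open>Kobayashi--Royden metric; a map D \<rightarrow> C^n is holomorphic iff all its components are.\<close>
definition kobayashi :: "(complex^'n::finite) set \<Rightarrow> complex^'n \<Rightarrow> complex^'n \<Rightarrow> real" where
  "kobayashi \<Omega> z X = Inf {1 / l | l. l > 0 \<and>
     (\<exists>f :: complex \<Rightarrow> complex^'n.
        (\<forall>i. (\<lambda>w. f w $ i) holomorphic_on ball 0 1) \<and>
        f ` ball 0 1 \<subseteq> \<Omega> \<and> f 0 = z \<and>
        (\<forall>i. deriv (\<lambda>w. f w $ i) 0 = complex_of_real l * X $ i))}"

end

theory Submission
  imports Defs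
begin

text \<open>
  For z in the cone near the origin put t = |z| and consider the analytic discs
  w \<mapsto> z + w Y + c w^2 e_1 with |Y| \<le> \<rho> = \<beta> t^(1 - 1/(2m)). Each such disc lies in the
  domain: if the linear displacement |w| \<rho> is small compared with k t, the point stays where
  Re z_n < -k t/2 and all other terms of the defining function are of lower order; if it is
  large, then |w| > k t/(2 \<rho>) and the term -A |c w^2|^m dominates the displacement, which
  requires \<rho>^(2m) \<le> C t^(2m-1) for a constant C, i.e. exactly the exponent 1 - 1/(2m).
  Taking Y proportional to X gives F(z,X) \<le> |X|/\<rho> \<le> K |X_n| / (\<beta> t^(1 - 1/(2m))), and
  d(z) \<le> t because the origin lies on the boundary of the domain.
\<close>

lemma norm_vector_smult:
  fixes x :: "'a::real_normed_div_algebra ^ 'n"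
  shows "norm (a *s x) = norm a * norm x"
proof -
  have "norm (a *s x) = sqrt ((norm a)\<^sup>2 * (\<Sum>i\<in>UNIV. (norm (x $ i))\<^sup>2))"
    by (simp add: norm_vec_def L2_set_def norm_mult power_mult_distrib sum_distrib_left)
  then show ?thesis
    by (simp add: real_sqrt_mult norm_vec_def L2_set_def)
qed

lemma norm_axis: "norm (axis i x) = norm (x :: 'a::real_normed_vector)"
proof -
  have "(\<Sum>j\<in>UNIV. (norm (axis i x $ j))\<^sup>2) = (\<Sum>j\<in>UNIV. if j = i then (norm x)\<^sup>2 else 0)"
    by (rule sum.cong) (auto simp: axis_def)
  then show ?thesis
    by (simp add: norm_vec_def L2_set_def)
qed

lemma kobayashi_le_inverse:
  fixes f :: "complex \<Rightarrow> complex ^ 'n::finite"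
  assumes "l > 0"
    and "\<forall>i. (\<lambda>w. f w $ i) holomorphic_on ball 0 1" and "f ` ball 0 1 \<subseteq> \<Omega>" and "f 0 = z"
    and "\<forall>i. deriv (\<lambda>w. f w $ i) 0 = complex_of_real l * X $ i"
  shows "kobayashi \<Omega> z X \<le> 1 / l"
  unfolding kobayashi_def using assms
  by (intro cInf_lower bdd_belowI[where m = 0]) auto

lemma kobayashi_le_of_quadratic_discs:
  fixes z E :: "complex ^ 'n::finite"
  assumes "\<rho> > 0"
    and discs: "\<And>Y w. norm Y \<le> \<rho> \<Longrightarrow> cmod w < 1 \<Longrightarrow> z + w *s Y + w\<^sup>2 *s E \<in> \<Omega>"
  shows "kobayashi \<Omega> z X \<le> norm X / \<rho>"
proof -
  have bound: "kobayashi \<Omega> z X \<le> 1 / l" if "l > 0" "l * norm X \<le> \<rho>" for l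
  proof (rule kobayashi_le_inverse[where f = "\<lambda>w. z + w *s (of_real l *s X) + w\<^sup>2 *s E"])
    show "\<forall>i. (\<lambda>w. (z + w *s (of_real l *s X) + w\<^sup>2 *s E) $ i) holomorphic_on ball 0 1"
      by (auto intro!: holomorphic_intros)
    show "\<forall>i. deriv (\<lambda>w. (z + w *s (of_real l *s X) + w\<^sup>2 *s E) $ i) 0 = of_real l * X $ i"
      by (auto intro!: DERIV_imp_deriv derivative_eq_intros)
    have "norm (of_real l *s X) \<le> \<rho>"
      using that by (simp add: norm_vector_smult)
    then show "(\<lambda>w. z + w *s (of_real l *s X) + w\<^sup>2 *s E) ` ball 0 1 \<subseteq> \<Omega>"
      by (intro image_subsetI discs) auto
  qed (use that in \<open>auto simp: vec_eq_iff\<close>)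
  show ?thesis
  proof (cases "X = 0")
    case True
    have "kobayashi \<Omega> z X \<le> 0 + e" if "e > 0" for e
      using bound[of "1 / e"] that True \<open>\<rho> > 0\<close> by simp
    then show ?thesis
      using True by (simp add: field_le_epsilon)
  next
    case False
    then show ?thesis
      using bound[of "\<rho> / norm X"] \<open>\<rho> > 0\<close> by simp
  qed
qed

lemma zero_in_closure_of_ray:
  fixes z :: "'a::real_normed_vector"
  assumes "\<And>s. 0 < s \<Longrightarrow> s \<le> 1 \<Longrightarrow> s *\<^sub>R z \<in> S"
  shows "0 \<in> closure S"
  unfolding closure_sequential
proof (intro exI conjI allI)
  show "inverse (real (Suc n)) *\<^sub>R z \<in> S" for n
    by (rule assms) (simp_all add: inverse_le_1_iff)
  have "(\<lambda>n. inverse (real (Suc n)) *\<^sub>R z) \<longlonglongrightarrow> 0 *\<^sub>R z"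
    by (intro tendsto_scaleR LIMSEQ_inverse_real_of_nat tendsto_const)
  then show "(\<lambda>n. inverse (real (Suc n)) *\<^sub>R z) \<longlonglongrightarrow> 0"
    by simp
qed

lemma dist_bd_le_norm: "0 \<in> frontier \<Omega> \<Longrightarrow> dist_bd \<Omega> z \<le> norm z"
  unfolding dist_bd_def using infdist_le[of 0 "frontier \<Omega>" z] by simp

lemma dist_bd_pos:
  assumes "open \<Omega>" and "z \<in> \<Omega>" and "frontier \<Omega> \<noteq> {}"
  shows "dist_bd \<Omega> z > 0"
  unfolding dist_bd_def using assms
  by (intro infdist_pos_not_in_closed) (auto simp: frontier_def interior_open)

definition defining_function :: "nat \<Rightarrow> real \<Rightarrow> real \<Rightarrow> 'n::finite \<Rightarrow> 'n \<Rightarrow> complex ^ 'n \<Rightarrow> real"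
  where "defining_function m A B i1 iN z = Re (z $ iN) - A * norm (z $ i1) ^ m
     + B * ((\<Sum>j\<in>UNIV - {i1}. norm (z $ j) ^ m) + norm (z $ iN) * norm z)"

lemma Omega_m_eq: "Omega_m m R A B i1 iN = ball 0 R \<inter> {z. defining_function m A B i1 iN z < 0}"
  unfolding Omega_m_def defining_function_def by auto

lemma open_Omega_m: "open (Omega_m m R A B i1 iN)"
  unfolding Omega_m_eq defining_function_def
  by (intro open_Int open_ball open_Collect_less continuous_intros)

lemma zero_notin_Omega_m: "m \<ge> 1 \<Longrightarrow> 0 \<notin> Omega_m m R A B i1 iN"
  by (simp add: Omega_m_def zero_power)

lemma defining_function_neg:
  fixes z :: "complex ^ 'n::finite" and b :: real
  assumes "i1 \<noteq> iN" and "B \<ge> 0"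
    and bound: "\<And>j. j \<noteq> i1 \<Longrightarrow> norm (z $ j) \<le> b"
    and less: "Re (z $ iN) + B * (real CARD('n) * b ^ m + b * norm z) < A * norm (z $ i1) ^ m"
  shows "defining_function m A B i1 iN z < 0"
proof -
  have "norm (z $ iN) \<le> b"
    using bound assms(1) by simp
  then have "b \<ge> 0"
    using norm_ge_zero order_trans by blast
  have "(\<Sum>j\<in>UNIV - {i1}. norm (z $ j) ^ m) \<le> real (card (UNIV - {i1})) * b ^ m"
    by (rule sum_bounded_above) (auto intro: power_mono bound)
  also have "\<dots> \<le> real CARD('n) * b ^ m"
    using \<open>b \<ge> 0\<close> by (intro mult_right_mono) (auto simp: card_mono)
  finally have "(\<Sum>j\<in>UNIV - {i1}. norm (z $ j) ^ m) + norm (z $ iN) * norm z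
      \<le> real CARD('n) * b ^ m + b * norm z"
    using \<open>norm (z $ iN) \<le> b\<close> by (intro add_mono mult_right_mono) auto
  then show ?thesis
    using less \<open>B \<ge> 0\<close> unfolding defining_function_def
    by (smt (verit) mult_left_mono)
qed

lemma quadratic_disc_bounds:
  fixes z Y :: "complex ^ 'n::finite" and w :: complex and i :: 'n and c :: real
  defines "v \<equiv> z + w *s Y + w\<^sup>2 *s axis i (complex_of_real c)"
  assumes Y: "norm Y \<le> \<rho>" and "cmod w < 1" and "c \<ge> 0"
  shows "\<And>j. j \<noteq> i \<Longrightarrow> norm (v $ j) \<le> norm z + cmod w * \<rho>"
    and "\<And>j. j \<noteq> i \<Longrightarrow> Re (v $ j) \<le> Re (z $ j) + cmod w * \<rho>"
    and "c * (cmod w)\<^sup>2 \<le> norm (v $ i) + norm z + cmod w * \<rho>"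
    and "norm v \<le> norm z + \<rho> + c"
proof -
  have wY: "norm (w * Y $ j) \<le> cmod w * \<rho>" for j
    unfolding norm_mult
    by (intro mult_left_mono order_trans[OF Finite_Cartesian_Product.norm_nth_le Y]) auto
  have vj: "v $ j = z $ j + w * Y $ j" if "j \<noteq> i" for j
    using that by (simp add: v_def axis_def)
  show "norm (v $ j) \<le> norm z + cmod w * \<rho>" if "j \<noteq> i" for j
    using vj[OF that] norm_triangle_ineq[of "z $ j" "w * Y $ j"]
      Finite_Cartesian_Product.norm_nth_le[of z j] wY[of j]
    by simp
  show "Re (v $ j) \<le> Re (z $ j) + cmod w * \<rho>" if "j \<noteq> i" for j
    using vj[OF that] complex_Re_le_cmod[of "w * Y $ j"] wY[of j] by simp
  have "c * (cmod w)\<^sup>2 = norm (v $ i - z $ i - w * Y $ i)"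
    using \<open>c \<ge> 0\<close> by (simp add: v_def norm_mult norm_power)
  also have "\<dots> \<le> norm (v $ i) + norm (z $ i) + norm (w * Y $ i)"
    by (rule order_trans[OF norm_triangle_ineq4 add_right_mono[OF norm_triangle_ineq4]])
  finally have "c * (cmod w)\<^sup>2 \<le> norm (v $ i) + norm (z $ i) + norm (w * Y $ i)" .
  then show "c * (cmod w)\<^sup>2 \<le> norm (v $ i) + norm z + cmod w * \<rho>"
    using Finite_Cartesian_Product.norm_nth_le[of z i] wY[of i] by linarith
  have "norm v \<le> norm z + cmod w * norm Y + (cmod w)\<^sup>2 * c"
    using norm_triangle_ineq[of "z + w *s Y" "w\<^sup>2 *s axis i (complex_of_real c)"]
      norm_triangle_ineq[of z "w *s Y"] \<open>c \<ge> 0\<close>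
    by (simp add: v_def norm_vector_smult norm_axis norm_power)
  moreover have "cmod w * norm Y \<le> 1 * \<rho>"
    using assms by (intro mult_mono) auto
  moreover have "(cmod w)\<^sup>2 * c \<le> 1 * c"
    using assms by (intro mult_right_mono) (auto simp: power_le_one)
  ultimately show "norm v \<le> norm z + \<rho> + c"
    by linarith
qed

lemma power_le_mult_of_le_one:
  fixes s \<rho> :: real
  assumes "0 \<le> s" and "s \<le> \<rho>" and "\<rho> \<le> 1" and "m \<ge> 2"
  shows "s ^ m \<le> \<rho> * s"
proof -
  have "s ^ (m - 1) \<le> s ^ 1"
    using assms by (intro power_decreasing) auto
  then have "s ^ (m - 1) * s \<le> \<rho> * s"
    using assms by (intro mult_right_mono) auto
  then show ?thesis
    using assms(4) by (cases m) (auto simp: mult.commute)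
qed

lemma quadratic_term_dominates:
  fixes a \<rho> c \<tau> M A :: real
  assumes "0 < \<tau>" and "\<tau> < a * \<rho>" and "0 < \<rho>" and "0 < c" and "0 < A" and "m \<ge> 1"
    and sq: "2 * M * \<rho>\<^sup>2 \<le> c * \<tau>"
    and pow: "2 * \<rho> ^ (2 * m) \<le> A * (c / 2) ^ m * \<tau> ^ (2 * m - 1)"
  shows "M * (a * \<rho>) \<le> c * a\<^sup>2 / 2" and "2 * (a * \<rho>) \<le> A * (c * a\<^sup>2 / 2) ^ m"
proof -
  have "a > 0"
    using assms(1-3) by (smt (verit) zero_less_mult_pos2)
  have "2 * M * \<rho>\<^sup>2 \<le> c * (a * \<rho>)"
    using sq mult_left_mono[OF less_imp_le[OF assms(2)], of c] \<open>c > 0\<close> by linarith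
  then have "\<rho> * (2 * M * \<rho>) \<le> \<rho> * (c * a)"
    by (simp add: power2_eq_square mult_ac)
  then have "2 * M * \<rho> \<le> c * a"
    using \<open>\<rho> > 0\<close> by simp
  then have "a * (2 * M * \<rho>) \<le> a * (c * a)"
    using \<open>a > 0\<close> by (intro mult_left_mono) auto
  then show "M * (a * \<rho>) \<le> c * a\<^sup>2 / 2"
    by (simp add: power2_eq_square mult_ac)
  define n where "n = 2 * m - 1"
  have Suc_n: "2 * m = Suc n"
    using \<open>m \<ge> 1\<close> by (simp add: n_def)
  have "\<rho> ^ n * (2 * \<rho>) = 2 * \<rho> ^ (2 * m)"
    by (simp add: Suc_n)
  also have "\<dots> \<le> A * (c / 2) ^ m * \<tau> ^ n"
    using pow by (simp add: n_def)
  also have "\<dots> \<le> A * (c / 2) ^ m * (a * \<rho>) ^ n"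
    using assms by (intro mult_left_mono power_mono) auto
  also have "\<dots> = \<rho> ^ n * (A * (c / 2) ^ m * a ^ n)"
    by (simp add: power_mult_distrib)
  finally have "2 * \<rho> \<le> A * (c / 2) ^ m * a ^ n"
    using \<open>\<rho> > 0\<close> by simp
  then have "a * (2 * \<rho>) \<le> a * (A * (c / 2) ^ m * a ^ n)"
    using \<open>a > 0\<close> by (intro mult_left_mono) auto
  also have "\<dots> = A * (c * a\<^sup>2 / 2) ^ m"
  proof -
    have "(a\<^sup>2) ^ m = a * a ^ n"
      by (simp only: power_mult[symmetric] Suc_n power_Suc)
    then show ?thesis
      by (simp add: power_mult_distrib power_divide mult_ac)
  qed
  finally show "2 * (a * \<rho>) \<le> A * (c * a\<^sup>2 / 2) ^ m"
    by (simp add: mult_ac)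
qed

lemma defining_function_neg_small_displacement:
  fixes v :: "complex ^ 'n::finite" and t s \<delta> :: real
  assumes "i1 \<noteq> iN" and "0 \<le> A" and "0 < B" and "0 < k" and "k \<le> 1"
    and "0 \<le> s" and small: "s \<le> k * t / 2"
    and comp: "\<And>j. j \<noteq> i1 \<Longrightarrow> norm (v $ j) \<le> t + s"
    and re: "Re (v $ iN) < - (k * t) + s" and "norm v \<le> \<delta>"
    and sum_small: "B * real CARD('n) * (2 * t) ^ m \<le> k * t / 4" and "2 * B * \<delta> \<le> k / 4"
  shows "defining_function m A B i1 iN v < 0"
proof (rule defining_function_neg[where b = "2 * t"])
  have "0 \<le> k * t"
    using \<open>0 \<le> s\<close> small by linarith
  then have "0 \<le> t"
    using \<open>0 < k\<close> by (simp add: zero_le_mult_iff)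
  then have "k * t \<le> t"
    using \<open>k \<le> 1\<close> mult_right_mono[of k 1 t] by simp
  then show "norm (v $ j) \<le> 2 * t" if "j \<noteq> i1" for j
    using comp[OF that] small \<open>0 \<le> t\<close> by linarith
  have "B * norm v \<le> B * \<delta>"
    using assms by (intro mult_left_mono) auto
  then have "2 * B * norm v \<le> k / 4"
    using assms by linarith
  then have "(2 * B * norm v) * t \<le> (k / 4) * t"
    using \<open>0 \<le> t\<close> by (rule mult_right_mono)
  moreover have "0 \<le> A * norm (v $ i1) ^ m"
    using \<open>0 \<le> A\<close> by simp
  moreover have "B * (real CARD('n) * (2 * t) ^ m + 2 * t * norm v)
      = B * real CARD('n) * (2 * t) ^ m + (2 * B * norm v) * t"
    by (simp add: algebra_simps)
  ultimately show "Re (v $ iN) + B * (real CARD('n) * (2 * t) ^ m + 2 * t * norm v)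
      < A * norm (v $ i1) ^ m"
    using re small sum_small by linarith
qed (use assms in auto)

lemma defining_function_neg_large_displacement:
  fixes v :: "complex ^ 'n::finite" and t a \<rho> c \<delta> M :: real
  assumes "i1 \<noteq> iN" and "m \<ge> 2" and "0 < A" and "0 < B" and "0 < k" and "0 < c"
    and "0 < t" and "0 \<le> a" and "a \<le> 1" and "0 < \<rho>" and "\<rho> \<le> 1"
    and large: "k * t / 2 < a * \<rho>"
    and comp: "\<And>j. j \<noteq> i1 \<Longrightarrow> norm (v $ j) \<le> t + a * \<rho>"
    and re: "Re (v $ iN) < a * \<rho>"
    and first: "c * a\<^sup>2 \<le> norm (v $ i1) + t + a * \<rho>"
    and "norm v \<le> \<delta>" and "1 + 2 / k \<le> M"
    and sum_small: "B * real CARD('n) * M ^ m * \<rho> \<le> 1 / 4" and "B * M * \<delta> \<le> 1 / 4"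
    and sq: "2 * M * \<rho>\<^sup>2 \<le> c * (k * t / 2)"
    and pow: "2 * \<rho> ^ (2 * m) \<le> A * (c / 2) ^ m * (k * t / 2) ^ (2 * m - 1)"
  shows "defining_function m A B i1 iN v < 0"
proof (rule defining_function_neg[where b = "M * (a * \<rho>)"])
  define s where "s = a * \<rho>"
  have "0 \<le> s" "s \<le> \<rho>"
    using assms by (auto simp: s_def mult_left_le_one_le)
  have "0 < k * t / 2" "m \<ge> 1"
    using assms by auto
  from quadratic_term_dominates[OF this(1) large \<open>0 < \<rho>\<close> \<open>0 < c\<close> \<open>0 < A\<close> this(2) sq pow]
  have dom: "M * s \<le> c * a\<^sup>2 / 2" "2 * s \<le> A * (c * a\<^sup>2 / 2) ^ m"
    by (simp_all add: s_def)
  have "0 < 2 / k"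
    using \<open>0 < k\<close> by simp
  then have "0 \<le> M"
    using \<open>1 + 2 / k \<le> M\<close> by linarith
  have "t \<le> (2 / k) * s"
    using large \<open>0 < k\<close> by (simp add: s_def field_simps)
  then have "t + s \<le> (1 + 2 / k) * s"
    by (simp add: distrib_right)
  also have "\<dots> \<le> M * s"
    using \<open>1 + 2 / k \<le> M\<close> \<open>0 \<le> s\<close> by (rule mult_right_mono)
  finally have tM: "t + s \<le> M * s" .
  show "norm (v $ j) \<le> M * (a * \<rho>)" if "j \<noteq> i1" for j
    using comp[OF that] tM by (simp add: s_def)
  have "(M * s) ^ m \<le> M ^ m * (\<rho> * s)"
    unfolding power_mult_distrib
    by (intro mult_left_mono power_le_mult_of_le_one)
      (use assms \<open>0 \<le> M\<close> \<open>0 \<le> s\<close> \<open>s \<le> \<rho>\<close> in auto)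
  then have "B * real CARD('n) * (M * s) ^ m \<le> B * real CARD('n) * (M ^ m * (\<rho> * s))"
    using \<open>0 < B\<close> by (intro mult_left_mono) auto
  also have "\<dots> = (B * real CARD('n) * M ^ m * \<rho>) * s"
    by (simp add: mult_ac)
  also have "\<dots> \<le> (1 / 4) * s"
    using sum_small \<open>0 \<le> s\<close> by (rule mult_right_mono)
  finally have sum_le: "B * real CARD('n) * (M * s) ^ m \<le> s / 4"
    by simp
  have "B * M * norm v \<le> B * M * \<delta>"
    using assms \<open>0 \<le> M\<close> by (intro mult_left_mono) auto
  then have "B * M * norm v \<le> 1 / 4"
    using assms by linarith
  then have prod_le: "(B * M * norm v) * s \<le> (1 / 4) * s"
    using \<open>0 \<le> s\<close> by (rule mult_right_mono)
  have "c * a\<^sup>2 / 2 \<le> norm (v $ i1)"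
    using first tM dom(1) by (simp add: s_def)
  then have "(c * a\<^sup>2 / 2) ^ m \<le> norm (v $ i1) ^ m"
    using \<open>0 < c\<close> by (intro power_mono) auto
  then have "A * (c * a\<^sup>2 / 2) ^ m \<le> A * norm (v $ i1) ^ m"
    using \<open>0 < A\<close> by (intro mult_left_mono) auto
  moreover have "B * (real CARD('n) * (M * s) ^ m + M * s * norm v)
      = B * real CARD('n) * (M * s) ^ m + (B * M * norm v) * s"
    by (simp add: algebra_simps)
  ultimately show "Re (v $ iN) + B * (real CARD('n) * (M * (a * \<rho>)) ^ m + M * (a * \<rho>) * norm v)
      < A * norm (v $ i1) ^ m"
    using re sum_le prod_le dom(2) \<open>0 \<le> s\<close> unfolding s_def by linarith
qed (use assms in auto)

lemma quadratic_disc_in_Omega_m: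
  fixes z Y :: "complex ^ 'n::finite" and w :: complex and \<rho> c \<delta> M :: real
  assumes "i1 \<noteq> iN" and "m \<ge> 2" and "0 < A" and "0 < B" and "0 < k" and "k \<le> 1"
    and cone: "- Re (z $ iN) > k * norm z"
    and "0 < c" and "norm Y \<le> \<rho>" and "cmod w < 1" and "0 < \<rho>" and "\<rho> \<le> 1"
    and "norm z + \<rho> + c \<le> \<delta>" and "\<delta> < R"
    and "B * real CARD('n) * (2 * norm z) ^ m \<le> k * norm z / 4" and "2 * B * \<delta> \<le> k / 4"
    and "1 + 2 / k \<le> M" and "B * real CARD('n) * M ^ m * \<rho> \<le> 1 / 4" and "B * M * \<delta> \<le> 1 / 4"
    and "2 * M * \<rho>\<^sup>2 \<le> c * (k * norm z / 2)"
    and "2 * \<rho> ^ (2 * m) \<le> A * (c / 2) ^ m * (k * norm z / 2) ^ (2 * m - 1)"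
  shows "z + w *s Y + w\<^sup>2 *s axis i1 (complex_of_real c) \<in> Omega_m m R A B i1 iN"
proof -
  define v where "v = z + w *s Y + w\<^sup>2 *s axis i1 (complex_of_real c)"
  note bounds = quadratic_disc_bounds[where z = z and Y = Y and w = w and i = i1 and c = c,
      folded v_def, OF \<open>norm Y \<le> \<rho>\<close> \<open>cmod w < 1\<close> less_imp_le[OF \<open>0 < c\<close>]]
  have "0 \<le> k * norm z"
    using \<open>0 < k\<close> by simp
  then have "z \<noteq> 0"
    using cone by auto
  have re: "Re (v $ iN) < - (k * norm z) + cmod w * \<rho>"
    using bounds(2)[OF \<open>i1 \<noteq> iN\<close>[symmetric]] cone by linarith
  then have re': "Re (v $ iN) < cmod w * \<rho>"
    using \<open>0 \<le> k * norm z\<close> by linarith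
  have "defining_function m A B i1 iN v < 0"
  proof (cases "cmod w * \<rho> \<le> k * norm z / 2")
    case True
    show ?thesis
      by (rule defining_function_neg_small_displacement[where t = "norm z" and \<delta> = \<delta>])
        (use assms bounds re True in auto)
  next
    case False
    show ?thesis
      by (rule defining_function_neg_large_displacement[where t = "norm z" and a = "cmod w"])
        (use assms bounds re' False \<open>z \<noteq> 0\<close> in auto)
  qed
  moreover have "v \<in> ball 0 R"
    using bounds(4) assms by simp
  ultimately show ?thesis
    unfolding Omega_m_eq v_def by simp
qed

lemma disc_radius_bounds:
  fixes t \<beta> c k M A :: real
  assumes "0 < t" and "t \<le> 1" and "0 < \<beta>" and "\<beta> \<le> 1" and "m \<ge> 1" and "0 \<le> M"
    and lin: "4 * M * \<beta> \<le> c * k"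
    and pow: "2 * \<beta> \<le> A * (c / 2) ^ m * (k / 2) ^ (2 * m - 1)"
  defines "\<rho> \<equiv> \<beta> * t powr (1 - 1 / (2 * real m))"
  shows "\<rho> \<le> \<beta>" and "2 * M * \<rho>\<^sup>2 \<le> c * (k * t / 2)"
    and "2 * \<rho> ^ (2 * m) \<le> A * (c / 2) ^ m * (k * t / 2) ^ (2 * m - 1)"
proof -
  define \<alpha> where "\<alpha> = 1 - 1 / (2 * real m)"
  have "1 / (2 * real m) \<le> 1 / 2"
    using \<open>m \<ge> 1\<close> by (simp add: field_simps)
  then have \<alpha>: "0 \<le> \<alpha>" "1 \<le> \<alpha> + \<alpha>"
    by (simp_all add: \<alpha>_def)
  have \<alpha>_2m: "\<alpha> * real (2 * m) = real (2 * m - 1)"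
    using \<open>m \<ge> 1\<close> by (simp add: \<alpha>_def algebra_simps of_nat_diff)
  have "t powr \<alpha> \<le> 1"
    using \<alpha> assms by (intro powr_le1) auto
  then show "\<rho> \<le> \<beta>"
    using \<open>0 < \<beta>\<close> mult_left_mono[of "t powr \<alpha>" 1 \<beta>] by (simp add: \<rho>_def \<alpha>_def[symmetric])
  have "(t powr \<alpha>)\<^sup>2 = t powr (\<alpha> + \<alpha>)"
    using powr_add[of t \<alpha> \<alpha>] by (simp add: power2_eq_square)
  also have "\<dots> \<le> t powr 1"
    using \<alpha> assms by (intro powr_mono') auto
  finally have "(t powr \<alpha>)\<^sup>2 \<le> t"
    using \<open>0 < t\<close> by simp
  moreover have "\<beta>\<^sup>2 \<le> \<beta>"
    using \<open>0 < \<beta>\<close> \<open>\<beta> \<le> 1\<close> by (simp add: power2_eq_square mult_left_le)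
  ultimately have "\<rho>\<^sup>2 \<le> \<beta> * t"
    unfolding \<rho>_def \<alpha>_def[symmetric] power_mult_distrib
    using \<open>0 < \<beta>\<close> \<open>0 < t\<close> by (intro mult_mono) auto
  then have "2 * M * \<rho>\<^sup>2 \<le> (4 * M * \<beta>) * (t / 2)"
    using \<open>0 \<le> M\<close> mult_left_mono[of "\<rho>\<^sup>2" "\<beta> * t" "2 * M"] by (simp add: mult_ac)
  also have "\<dots> \<le> (c * k) * (t / 2)"
    using lin \<open>0 < t\<close> by (intro mult_right_mono) auto
  finally show "2 * M * \<rho>\<^sup>2 \<le> c * (k * t / 2)"
    by (simp add: mult_ac)
  have "(t powr \<alpha>) ^ (2 * m) = t ^ (2 * m - 1)"
    using \<open>0 < t\<close> \<alpha>_2m by (simp add: powr_realpow[symmetric] powr_powr)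
  then have "\<rho> ^ (2 * m) = \<beta> ^ (2 * m) * t ^ (2 * m - 1)"
    by (simp add: \<rho>_def \<alpha>_def[symmetric] power_mult_distrib)
  also have "\<dots> \<le> \<beta> ^ 1 * t ^ (2 * m - 1)"
    using assms by (intro mult_right_mono power_decreasing) auto
  finally have "2 * \<rho> ^ (2 * m) \<le> (2 * \<beta>) * t ^ (2 * m - 1)"
    by simp
  also have "\<dots> \<le> (A * (c / 2) ^ m * (k / 2) ^ (2 * m - 1)) * t ^ (2 * m - 1)"
    using pow \<open>0 < t\<close> by (intro mult_right_mono) auto
  finally show "2 * \<rho> ^ (2 * m) \<le> A * (c / 2) ^ m * (k * t / 2) ^ (2 * m - 1)"
    by (simp add: power_mult_distrib power_divide mult_ac)
qed

lemma eventually_at_right_0_mult_le: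
  fixes a C :: real
  assumes "0 < C"
  shows "\<forall>\<^sub>F x in at_right 0. a * x \<le> C"
proof -
  have "((\<lambda>x. a * x) \<longlongrightarrow> a * 0) (at_right 0)"
    by (intro tendsto_intros)
  then have "\<forall>\<^sub>F x in at_right 0. a * x < C"
    using assms by (intro order_tendstoD(2)) auto
  then show ?thesis
    by (rule eventually_mono) simp
qed

lemma exists_pos_if_eventually_at_right_0:
  assumes "\<forall>\<^sub>F x in at_right (0::real). P x"
  shows "\<exists>x>0. P x"
  using eventually_happens[OF eventually_conj[OF eventually_at_right_less assms]] by auto

lemma zero_notin_Lambda_cone: "0 \<notin> Lambda_cone k iN"
  by (simp add: Lambda_cone_def)

lemma scaleR_Lambda_cone:
  assumes "0 < s" and "z \<in> Lambda_cone k iN"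
  shows "s *\<^sub>R z \<in> Lambda_cone k iN"
proof -
  have "s * (k * norm z) < s * (- Re (z $ iN))"
    using assms by (intro mult_strict_left_mono) (auto simp: Lambda_cone_def)
  then show ?thesis
    using \<open>0 < s\<close> by (simp add: Lambda_cone_def algebra_simps)
qed

lemma disc_constants_exist:
  fixes R A B k M N :: real
  assumes "0 < R" and "0 < A" and "0 < B" and "0 < k" and "0 < M" and "0 < N"
  obtains \<delta> c \<beta> R1 where "0 < \<delta>" "\<delta> \<le> R / 2" "2 * B * \<delta> \<le> k / 4" "B * M * \<delta> \<le> 1 / 4"
    and "c = \<delta> / 3"
    and "0 < \<beta>" "\<beta> \<le> 1" "\<beta> \<le> c" "4 * M * \<beta> \<le> c * k" "B * N * M ^ m * \<beta> \<le> 1 / 4"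
      "2 * \<beta> \<le> A * (c / 2) ^ m * (k / 2) ^ (2 * m - 1)"
    and "0 < R1" "R1 \<le> 1" "R1 \<le> c" "4 * B * N * 2 ^ m * R1 \<le> k"
proof -
  have "\<forall>\<^sub>F \<delta> in at_right 0. 1 * \<delta> \<le> R / 2 \<and> (2 * B) * \<delta> \<le> k / 4 \<and> (B * M) * \<delta> \<le> 1 / 4"
    using assms by (intro eventually_conj eventually_at_right_0_mult_le) auto
  then obtain \<delta> where \<delta>: "0 < \<delta>" "\<delta> \<le> R / 2" "2 * B * \<delta> \<le> k / 4" "B * M * \<delta> \<le> 1 / 4"
    by (auto dest: exists_pos_if_eventually_at_right_0)
  define c where "c = \<delta> / 3"
  have "0 < c"
    using \<delta> by (simp add: c_def)
  have "\<forall>\<^sub>F \<beta> in at_right 0. 1 * \<beta> \<le> 1 \<and> 1 * \<beta> \<le> c \<and> (4 * M) * \<beta> \<le> c * k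
      \<and> (B * N * M ^ m) * \<beta> \<le> 1 / 4 \<and> 2 * \<beta> \<le> A * (c / 2) ^ m * (k / 2) ^ (2 * m - 1)"
    using assms \<open>0 < c\<close> by (intro eventually_conj eventually_at_right_0_mult_le) auto
  then obtain \<beta> where "0 < \<beta>" "\<beta> \<le> 1" "\<beta> \<le> c" "4 * M * \<beta> \<le> c * k"
      "B * N * M ^ m * \<beta> \<le> 1 / 4" "2 * \<beta> \<le> A * (c / 2) ^ m * (k / 2) ^ (2 * m - 1)"
    by (auto dest: exists_pos_if_eventually_at_right_0)
  moreover have "\<forall>\<^sub>F R1 in at_right 0. 1 * R1 \<le> 1 \<and> 1 * R1 \<le> c \<and> (4 * B * N * 2 ^ m) * R1 \<le> k"
    using assms \<open>0 < c\<close> by (intro eventually_conj eventually_at_right_0_mult_le) auto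
  then obtain R1 where "0 < R1" "R1 \<le> 1" "R1 \<le> c" "4 * B * N * 2 ^ m * R1 \<le> k"
    by (auto dest: exists_pos_if_eventually_at_right_0)
  ultimately show ?thesis
    using that \<delta> c_def by blast
qed

lemma Omega_m_contains_quadratic_discs:
  fixes i1 iN :: "'n::finite"
  assumes "i1 \<noteq> iN" and "m \<ge> 2" and "0 < R" and "0 < A" and "0 < B" and "0 < k" and "k \<le> 1"
  shows "\<exists>R1>0. \<exists>\<beta>>0. \<exists>c. \<forall>z \<in> ball 0 R1 \<inter> Lambda_cone k iN. \<forall>Y w.
    norm Y \<le> \<beta> * norm z powr (1 - 1 / (2 * real m)) \<longrightarrow> cmod w < 1 \<longrightarrow>
    z + w *s Y + w\<^sup>2 *s axis i1 (complex_of_real c) \<in> Omega_m m R A B i1 iN"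
proof -
  define N M where "N = real CARD('n)" and "M = 1 + 2 / k"
  have "0 < N" "0 < M"
    using \<open>0 < k\<close> by (simp_all add: N_def M_def add_pos_pos)
  obtain \<delta> c \<beta> R1 where \<delta>: "0 < \<delta>" "\<delta> \<le> R / 2" "2 * B * \<delta> \<le> k / 4" "B * M * \<delta> \<le> 1 / 4"
    and c: "c = \<delta> / 3"
    and \<beta>: "0 < \<beta>" "\<beta> \<le> 1" "\<beta> \<le> c" "4 * M * \<beta> \<le> c * k" "B * N * M ^ m * \<beta> \<le> 1 / 4"
      "2 * \<beta> \<le> A * (c / 2) ^ m * (k / 2) ^ (2 * m - 1)"
    and R1: "0 < R1" "R1 \<le> 1" "R1 \<le> c" "4 * B * N * 2 ^ m * R1 \<le> k"
    using disc_constants_exist[OF assms(3-5,6) \<open>0 < M\<close> \<open>0 < N\<close>] by blast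
  have "z + w *s Y + w\<^sup>2 *s axis i1 (complex_of_real c) \<in> Omega_m m R A B i1 iN"
    if z: "z \<in> ball 0 R1 \<inter> Lambda_cone k iN"
      and Y: "norm Y \<le> \<beta> * norm z powr (1 - 1 / (2 * real m))" and "cmod w < 1" for z Y w
  proof -
    define t \<rho> where "t = norm z" and "\<rho> = \<beta> * t powr (1 - 1 / (2 * real m))"
    have t: "0 < t" "t < R1" "k * t < - Re (z $ iN)"
      using z zero_notin_Lambda_cone by (auto simp: t_def Lambda_cone_def)
    have radius: "\<rho> \<le> \<beta>" "2 * M * \<rho>\<^sup>2 \<le> c * (k * t / 2)"
        "2 * \<rho> ^ (2 * m) \<le> A * (c / 2) ^ m * (k * t / 2) ^ (2 * m - 1)"
      using disc_radius_bounds[of t \<beta> m M c k A] t R1 \<beta> assms \<open>0 < M\<close> by (simp_all add: \<rho>_def)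
    have "0 < \<rho>"
      using \<open>0 < \<beta>\<close> \<open>0 < t\<close> by (simp add: \<rho>_def)
    have "B * N * M ^ m * \<rho> \<le> B * N * M ^ m * \<beta>"
      using radius(1) \<open>0 < B\<close> \<open>0 < N\<close> \<open>0 < M\<close> by (intro mult_left_mono) auto
    then have sum_small: "B * N * M ^ m * \<rho> \<le> 1 / 4"
      using \<beta> by linarith
    have "norm Y \<le> \<rho>"
      using Y by (simp add: \<rho>_def t_def)
    have "t ^ m \<le> t * t"
      using t R1 assms by (intro power_le_mult_of_le_one) auto
    then have "B * N * (2 * t) ^ m \<le> (4 * B * N * 2 ^ m * t) * (t / 4)"
      using \<open>0 < N\<close> \<open>0 < B\<close> by (simp add: power_mult_distrib mult_left_mono mult_ac)
    also have "\<dots> \<le> k * (t / 4)"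
    proof (rule mult_right_mono)
      have "4 * B * N * 2 ^ m * t \<le> 4 * B * N * 2 ^ m * R1"
        using t \<open>0 < B\<close> \<open>0 < N\<close> by (intro mult_left_mono) auto
      then show "4 * B * N * 2 ^ m * t \<le> k"
        using R1 by linarith
    qed (use t in auto)
    finally have "B * N * (2 * t) ^ m \<le> k * t / 4"
      by simp
    then show ?thesis
      by (intro quadratic_disc_in_Omega_m[where \<rho> = \<rho> and \<delta> = \<delta> and M = M])
        (use assms that \<delta> c \<beta> R1 t radius sum_small \<open>0 < \<rho>\<close> \<open>norm Y \<le> \<rho>\<close>
          in \<open>auto simp: t_def N_def M_def\<close>)
  qed
  then show ?thesis
    using R1(1) \<beta>(1) by blast
qed

lemma zero_in_frontier_Omega_m:
  assumes "m \<ge> 1" and z: "z \<in> ball 0 r \<inter> Lambda_cone k iN"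
    and sub: "ball 0 r \<inter> Lambda_cone k iN \<subseteq> Omega_m m R A B i1 iN"
  shows "0 \<in> frontier (Omega_m m R A B i1 iN)"
proof -
  have "s *\<^sub>R z \<in> Omega_m m R A B i1 iN" if "0 < s" "s \<le> 1" for s
  proof (rule subsetD[OF sub])
    have "norm (s *\<^sub>R z) \<le> norm z"
      using that by (simp add: mult_left_le_one_le)
    then show "s *\<^sub>R z \<in> ball 0 r \<inter> Lambda_cone k iN"
      using z that scaleR_Lambda_cone by auto
  qed
  then have "0 \<in> closure (Omega_m m R A B i1 iN)"
    by (rule zero_in_closure_of_ray)
  then show ?thesis
    using zero_notin_Omega_m[OF \<open>m \<ge> 1\<close>, of R A B i1 iN]
    by (simp add: frontier_def interior_open[OF open_Omega_m])
qed

lemma kobayashi_Omega_m_le_of_discs: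
  fixes E :: "complex ^ 'n::finite"
  assumes "m \<ge> 1" and "0 < \<beta>" and "0 \<le> \<alpha>"
    and discs: "\<forall>z \<in> ball 0 r \<inter> Lambda_cone k iN. \<forall>Y w.
      norm Y \<le> \<beta> * norm z powr \<alpha> \<longrightarrow> cmod w < 1 \<longrightarrow> z + w *s Y + w\<^sup>2 *s E \<in> Omega_m m R A B i1 iN"
    and z: "z \<in> ball 0 r \<inter> Lambda_cone k iN" and X: "norm X \<le> K * norm (X $ iN)"
  shows "kobayashi (Omega_m m R A B i1 iN) z X
    \<le> K / \<beta> * norm (X $ iN) / dist_bd (Omega_m m R A B i1 iN) z powr \<alpha>"
proof -
  let ?\<Omega> = "Omega_m m R A B i1 iN"
  have cone_sub: "ball 0 r \<inter> Lambda_cone k iN \<subseteq> ?\<Omega>"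
  proof
    fix x
    assume "x \<in> ball 0 r \<inter> Lambda_cone k iN"
    then show "x \<in> ?\<Omega>"
      using discs[rule_format, of x 0 0] \<open>0 < \<beta>\<close> by simp
  qed
  have "0 \<in> frontier ?\<Omega>"
    using zero_in_frontier_Omega_m[OF \<open>m \<ge> 1\<close> z cone_sub] .
  then have d: "0 < dist_bd ?\<Omega> z" "dist_bd ?\<Omega> z \<le> norm z"
    using dist_bd_pos[OF open_Omega_m subsetD[OF cone_sub z]] dist_bd_le_norm by auto
  have "z \<noteq> 0"
    using z zero_notin_Lambda_cone by blast
  then have "0 < \<beta> * norm z powr \<alpha>"
    using \<open>0 < \<beta>\<close> by simp
  then have "kobayashi ?\<Omega> z X \<le> norm X / (\<beta> * norm z powr \<alpha>)"
    by (rule kobayashi_le_of_quadratic_discs[where E = E]) (use discs z in blast)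
  also have "\<dots> \<le> K * norm (X $ iN) / (\<beta> * dist_bd ?\<Omega> z powr \<alpha>)"
    using X order_trans[OF norm_ge_zero X] d \<open>0 < \<beta>\<close> \<open>0 \<le> \<alpha>\<close>
    by (intro frac_le mult_left_mono powr_mono2) auto
  finally show ?thesis
    by simp
qed

theorem proposition2p4:
  fixes i1 iN :: "'n::finite"
    and m :: nat and R A B k K :: real
  assumes "i1 \<noteq> iN"
    and "m \<ge> 2" and "R > 0" and "A > 0" and "B > 0"
    and "0 < k" and "k < 1" and "K > 0"
  shows "\<exists>R1 > 0. \<exists>C > 0. \<forall>z \<in> ball 0 R1 \<inter> Lambda_cone k iN. \<forall>X :: complex^'n.
           norm X \<le> K * norm (X $ iN) \<longrightarrow>
           kobayashi (Omega_m m R A B i1 iN) z X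
             \<le> C * norm (X $ iN) / dist_bd (Omega_m m R A B i1 iN) z powr (1 - 1 / (2 * real m))"
proof -
  obtain R1 \<beta> c where "0 < R1" "0 < \<beta>" and discs: "\<forall>z \<in> ball 0 R1 \<inter> Lambda_cone k iN. \<forall>Y w.
      norm Y \<le> \<beta> * norm z powr (1 - 1 / (2 * real m)) \<longrightarrow> cmod w < 1 \<longrightarrow>
      z + w *s Y + w\<^sup>2 *s axis i1 (complex_of_real c) \<in> Omega_m m R A B i1 iN"
    using Omega_m_contains_quadratic_discs[OF assms(1-6) less_imp_le[OF \<open>k < 1\<close>]] by blast
  have "0 \<le> 1 - 1 / (2 * real m)" "m \<ge> 1"
    using \<open>m \<ge> 2\<close> by (auto simp: field_simps)
  with discs have "kobayashi (Omega_m m R A B i1 iN) z X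
      \<le> K / \<beta> * norm (X $ iN) / dist_bd (Omega_m m R A B i1 iN) z powr (1 - 1 / (2 * real m))"
    if "z \<in> ball 0 R1 \<inter> Lambda_cone k iN" and "norm X \<le> K * norm (X $ iN)" for z X
    using kobayashi_Omega_m_le_of_discs \<open>0 < \<beta>\<close> that by blast
  moreover have "0 < K / \<beta>"
    using \<open>0 < \<beta>\<close> \<open>K > 0\<close> by simp
  ultimately show ?thesis
    using \<open>0 < R1\<close> by blast
qed

end
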